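(* Let $A\subseteq 2^\omega$ be $\mu$-measurable. If $\Phi(A)\neq\emptyset$ and $\Phi(A)$ has empty interior, then $\Phi(A)$ is a complete $\boldsymbol{\Pi}^0_3$ set.
   Context: $2^\omega$ is the Cantor space with the product topology; $N_s=\{x\in 2^\omega: s\subset x\}$ for finite binary $s$. $\mu$ is the coin-tossing measure on $2^\omega$ with $\mu(N_s)=2^{-\mathrm{lh}(s)}$. For measurable $A$, $\Phi(A)=\{x: \lim_{n}\mu(A\cap N_{x\restriction n})/\mu(N_{x\restriction n})=1\}$. $\boldsymbol{\Pi}^0_3$ is the class of $F_{\sigma\delta}$ sets; $X\subseteq 2^\omega$ is complete $\boldsymbol{\Pi}^0_3$ if $X\in\boldsymbol{\Pi}^0_3$ and every $\boldsymbol{\Pi}^0_3$ subset of $2^\omega$ is a continuous preimage $f^{-1}(X)$ with $f:2^\omega\to 2^\omega$ continuous (equivalently $X$ is $F_{\sigma\delta}$ but not $G_{\delta\sigma}$). *)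

theory Defs
  imports "HOL-Analysis.Analysis" "HOL-Probability.Probability"
begin

text \<open>Cantor space is the type nat \<Rightarrow> bool with its library product topology
  (bool discrete).\<close>

definition cyl :: "bool list \<Rightarrow> (nat \<Rightarrow> bool) set" where
  "cyl s = {x. \<forall>i<length s. x i = s ! i}"

definition restr :: "(nat \<Rightarrow> bool) \<Rightarrow> nat \<Rightarrow> bool list" where
  "restr x n = map x [0..<n]"

definition coin :: "(nat \<Rightarrow> bool) measure" where
  "coin = PiM UNIV (\<lambda>_. measure_pmf (bernoulli_pmf (1/2)))"

definition mu_measurable :: "(nat \<Rightarrow> bool) set \<Rightarrow> bool" where
  "mu_measurable A \<longleftrightarrow> A \<in> sets (completion coin)"

definition density_points :: "(nat \<Rightarrow> bool) set \<Rightarrow> (nat \<Rightarrow> bool) set" where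
  "density_points A = {x. (\<lambda>n. measure (completion coin) (A \<inter> cyl (restr x n))
                              / measure (completion coin) (cyl (restr x n))) \<longlonglongrightarrow> 1}"

definition Pi03 :: "(nat \<Rightarrow> bool) set \<Rightarrow> bool" where
  "Pi03 X \<longleftrightarrow> (\<exists>F :: nat \<Rightarrow> nat \<Rightarrow> (nat \<Rightarrow> bool) set.
      (\<forall>m n. closed (F m n)) \<and> X = (\<Inter>m. \<Union>n. F m n))"

definition complete_Pi03 :: "(nat \<Rightarrow> bool) set \<Rightarrow> bool" where
  "complete_Pi03 X \<longleftrightarrow> Pi03 X \<and>
     (\<forall>Y. Pi03 Y \<longrightarrow> (\<exists>f :: (nat \<Rightarrow> bool) \<Rightarrow> (nat \<Rightarrow> bool).
         continuous_on UNIV f \<and> Y = f -` X))"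

end

theory Submission
  imports Defs
begin

text \<open>
  A \<open>\<mu>\<close>-measurable \<open>A\<close> differs
  from a measurable \<open>S\<close> by a null set, so \<open>\<Phi>(A) = dens S\<close>, the set of points \<open>x\<close> at which
  the relative measure \<open>ratio S (restr x n)\<close> of \<open>S\<close> in the \<open>n\<close>-th cylinder around \<open>x\<close> tends to \<open>1\<close>.

  \<^item> Upper bound: since each \<open>x \<mapsto> ratio S (restr x n)\<close> depends on finitely many coordinates,
    convergence to \<open>1\<close>, a countable conjunction of eventual lower bounds, is \<open>\<Pi>\<^sup>0\<^sub>3\<close>.
  \<^item> Tools: the ratios form a martingale along each branch, so they obey a maximal inequality;
    together with the approximation of measurable sets by clopen ones this yields the Lebesgue
    density theorem for \<open>\<mu>\<close>.
  \<^item> Hardness: for \<open>Y = (\<Inter>m. \<Union>n. F m n)\<close> with closed \<open>F m n\<close>, the point \<open>x\<close> lies in row \<open>m\<close> iff a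
    monotone index \<open>hit (F m) x\<close>, computed from finite prefixes of \<open>x\<close>, jumps only finitely often.
    A continuous map sends \<open>x\<close> to a limit of strings along which the ratio of \<open>- S\<close> dips to
    \<open>(1/2)^(m+3)\<close> at every jump of row \<open>m\<close> and otherwise decays to \<open>0\<close>.  The dips exist because
    \<open>- S\<close> is non-null in every cylinder (empty interior), the decays by the density theorem,
    and the start uses a point of \<open>\<Phi>(A) \<noteq> {}\<close>.
\<close>

interpretation coin: prob_space coin
  unfolding coin_def by (intro prob_space_PiM prob_space_measure_pmf)

lemma space_coin [simp]: "space coin = UNIV"
  by (simp add: coin_def space_PiM)

lemma sets_coin_eq: "sets coin = sigma_sets UNIV {{x. x i \<in> B} | i B. True}"
  unfolding coin_def sets_PiM_single by simp

lemma sets_coin_coordinate: "{x. x i \<in> B} \<in> sets coin"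
  unfolding sets_coin_eq by (rule sigma_sets.Basic) blast

lemma sets_coin_compl [measurable]: "S \<in> sets coin \<Longrightarrow> - S \<in> sets coin"
  using sets.compl_sets[of S coin] by (simp add: Compl_eq_Diff_UNIV)

lemma length_restr [simp]: "length (restr x n) = n"
  by (simp add: restr_def)

lemma nth_restr [simp]: "i < n \<Longrightarrow> restr x n ! i = x i"
  by (simp add: restr_def)

lemma take_restr: "n \<le> m \<Longrightarrow> take n (restr x m) = restr x n"
  by (simp add: restr_def take_map)

lemma restr_Suc: "restr x (Suc n) = restr x n @ [x n]"
  by (simp add: restr_def)

lemma mem_cyl_iff: "x \<in> cyl s \<longleftrightarrow> restr x (length s) = s"
  by (auto simp: cyl_def list_eq_iff_nth_eq)

lemma self_in_cyl [simp]: "x \<in> cyl (restr x n)"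
  by (simp add: cyl_def)

lemma cyl_nonempty: "cyl s \<noteq> {}"
proof -
  have "(\<lambda>i. i < length s \<and> s ! i) \<in> cyl s" by (simp add: cyl_def)
  thus ?thesis by blast
qed

lemma cyl_restr_mono: "n \<le> m \<Longrightarrow> cyl (restr x m) \<subseteq> cyl (restr x n)"
  by (auto simp: cyl_def)

lemma cyl_append: "cyl (s @ [b]) = cyl s \<inter> {x. x (length s) = b}"
  by (auto simp: cyl_def nth_append less_Suc_eq)

lemma cyl_children:
  "cyl s = cyl (s @ [False]) \<union> cyl (s @ [True])"
  "cyl (s @ [False]) \<inter> cyl (s @ [True]) = {}"
  unfolding cyl_append by auto

lemma restr_preimage_eq: "{x. restr x n \<in> S} = (\<Union>u\<in>{u\<in>S. length u = n}. cyl u)"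
  by (auto simp: mem_cyl_iff)

lemma cyl_sets [measurable, simp]: "cyl s \<in> sets coin"
proof -
  have "cyl s = (\<Inter>i<length s. {x. x i \<in> {s ! i}}) \<inter> space coin"
    by (auto simp: cyl_def)
  also have "\<dots> \<in> sets coin"
    using sets_coin_coordinate[of _ "{_}"]
    by (cases "length s = 0") (auto intro!: sets.finite_INT simp: sets.top[of coin, simplified])
  finally show ?thesis .
qed

lemma restr_preimage_sets [measurable]: "{x. restr x n \<in> S} \<in> sets coin"
proof -
  have "finite {u::bool list. set u \<subseteq> UNIV \<and> length u = n}"
    by (rule finite_lists_length_eq) simp
  hence "finite {u\<in>S. length u = n}" by (rule rev_finite_subset) auto
  thus ?thesis unfolding restr_preimage_eq by (intro sets.finite_UN) auto
qed

lemma restr_pred_sets [measurable]: "{x. P (restr x n)} \<in> sets coin"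
  using restr_preimage_sets[of n "Collect P"] by simp

lemma emeasure_cyl: "emeasure coin (cyl s) = ennreal ((1/2) ^ length s)"
proof -
  interpret product_prob_space "\<lambda>_. measure_pmf (bernoulli_pmf (1/2))" UNIV
    by unfold_locales
  have "cyl s = {x\<in>space coin. \<forall>i\<in>{..<length s}. x i \<in> {s ! i}}"
    by (auto simp: cyl_def)
  hence "emeasure coin (cyl s) =
      (\<Prod>i<length s. emeasure (measure_pmf (bernoulli_pmf (1/2))) {s ! i})"
    unfolding coin_def by (simp only:) (rule emeasure_PiM_Collect, auto)
  also have "\<dots> = (\<Prod>i<length s. ennreal (1/2))"
    by (intro prod.cong refl) (simp add: emeasure_pmf_single split: bool.split)
  also have "\<dots> = ennreal ((1/2) ^ length s)"
    by (simp only: prod_constant card_lessThan ennreal_power)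
  finally show ?thesis .
qed

lemma measure_cyl: "measure coin (cyl s) = (1/2) ^ length s"
  using emeasure_cyl[of s] by (simp add: coin.emeasure_eq_measure)

lemma open_cyl: "open (cyl s)"
proof -
  have "cyl s = {x. \<forall>i\<in>{..<length s}. x (id i) \<in> {s ! i}}" by (auto simp: cyl_def)
  also have "open \<dots>"
    by (rule product_topology_basis') (auto intro: discrete_topology_class.open_discrete)
  finally show ?thesis .
qed

lemma open_restr_preimage: "open {x. restr x n \<in> S}"
  unfolding restr_preimage_eq by (auto intro!: open_UN open_cyl)

lemma closed_restr_pred: "closed {x. P (restr x n)}"
proof -
  have "{x. P (restr x n)} = - {x. restr x n \<in> - Collect P}" by auto
  thus ?thesis using open_restr_preimage[of n "- Collect P"] by (simp add: closed_def)
qed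

lemma open_contains_cyl:
  assumes "open U" "x \<in> U"
  shows "\<exists>k. cyl (restr x k) \<subseteq> U"
proof -
  from assms obtain V where V: "finite {i. V i \<noteq> (UNIV::bool set)}"
      "x \<in> Pi\<^sub>E UNIV V" "Pi\<^sub>E UNIV V \<subseteq> U"
    unfolding open_fun_def openin_product_topology_alt by force
  obtain k where k: "\<forall>i\<in>{i. V i \<noteq> UNIV}. i < k"
    using V(1) finite_nat_set_iff_bounded by blast
  have "cyl (restr x k) \<subseteq> Pi\<^sub>E UNIV V"
  proof
    fix y assume y: "y \<in> cyl (restr x k)"
    have "y i \<in> V i" for i
    proof (cases "i < k")
      case True
      thus ?thesis using y V(2) by (auto simp: cyl_def)
    next
      case False
      hence "V i = UNIV" using k by auto
      thus ?thesis by simp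
    qed
    thus "y \<in> Pi\<^sub>E UNIV V" by auto
  qed
  thus ?thesis using V(3) by blast
qed

definition ratio :: "(nat \<Rightarrow> bool) set \<Rightarrow> bool list \<Rightarrow> real" where
  "ratio E s = measure coin (E \<inter> cyl s) / measure coin (cyl s)"

lemma measure_cyl_pos: "0 < measure coin (cyl s)"
  by (simp add: measure_cyl)

lemma measure_Int_cyl: "measure coin (E \<inter> cyl s) = ratio E s * measure coin (cyl s)"
  using measure_cyl_pos[of s] by (simp add: ratio_def)

lemma ratio_nonneg: "0 \<le> ratio E s"
  by (simp add: ratio_def)

lemma ratio_le_1: "E \<in> sets coin \<Longrightarrow> ratio E s \<le> 1"
  using coin.finite_measure_mono[of "E \<inter> cyl s" "cyl s"] measure_cyl_pos[of s]
  by (simp add: ratio_def)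

lemma ratio_compl: "E \<in> sets coin \<Longrightarrow> ratio (- E) s = 1 - ratio E s"
proof -
  assume E: "E \<in> sets coin"
  have "- E \<inter> cyl s = cyl s - E \<inter> cyl s" by auto
  hence "measure coin (- E \<inter> cyl s) = measure coin (cyl s) - measure coin (E \<inter> cyl s)"
    using E by (simp add: coin.finite_measure_Diff)
  thus ?thesis using measure_cyl_pos[of s] by (simp add: ratio_def diff_divide_distrib)
qed

lemma measure_Int_cyl_children:
  assumes "E \<in> sets coin"
  shows "measure coin (E \<inter> cyl s) =
    measure coin (E \<inter> cyl (s @ [False])) + measure coin (E \<inter> cyl (s @ [True]))"
proof -
  have "E \<inter> cyl s = (E \<inter> cyl (s @ [False])) \<union> (E \<inter> cyl (s @ [True]))"
    "(E \<inter> cyl (s @ [False])) \<inter> (E \<inter> cyl (s @ [True])) = {}"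
    using cyl_children[of s] by blast+
  thus ?thesis using assms by (simp add: coin.finite_measure_Union)
qed

lemma ratio_average:
  assumes "E \<in> sets coin"
  shows "ratio E s = (ratio E (s @ [False]) + ratio E (s @ [True])) / 2"
  using measure_Int_cyl_children[OF assms, of s] by (simp add: ratio_def measure_cyl field_simps)

lemma ratio_child_le: "E \<in> sets coin \<Longrightarrow> ratio E (s @ [b]) \<le> 2 * ratio E s"
  using ratio_average[of E s] ratio_nonneg[of E "s @ [\<not> b]"] by (cases b) auto

subsection \<open>A maximal inequality\<close>

definition exceed_upto :: "(nat \<Rightarrow> bool) set \<Rightarrow> real \<Rightarrow> bool list \<Rightarrow> nat \<Rightarrow> (nat \<Rightarrow> bool) set" where
  "exceed_upto E l t L = {y \<in> cyl t. \<exists>n. length t \<le> n \<and> n \<le> L \<and> l < ratio E (restr y n)}"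

definition exceed :: "(nat \<Rightarrow> bool) set \<Rightarrow> real \<Rightarrow> bool list \<Rightarrow> (nat \<Rightarrow> bool) set" where
  "exceed E l t = {y \<in> cyl t. \<exists>n\<ge>length t. l < ratio E (restr y n)}"

lemma exceed_upto_sets [measurable]: "exceed_upto E l t L \<in> sets coin"
proof -
  have "exceed_upto E l t L = cyl t \<inter> (\<Union>n\<in>{length t..L}. {y. l < ratio E (restr y n)})"
    by (auto simp: exceed_upto_def)
  also have "\<dots> \<in> sets coin"
    by (intro sets.Int sets.finite_UN cyl_sets restr_pred_sets finite_atLeastAtMost)
  finally show ?thesis .
qed

lemma exceed_upto_subset: "exceed_upto E l t L \<subseteq> cyl t"
  by (auto simp: exceed_upto_def)

lemma exceed_eq_UN: "exceed E l t = (\<Union>L. exceed_upto E l t L)"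
  by (auto simp: exceed_def exceed_upto_def)

lemma exceed_sets [measurable]: "exceed E l t \<in> sets coin"
  unfolding exceed_eq_UN by auto

lemma measure_le_if_ratio_gt:
  assumes "l < ratio E t" "0 < l" "X \<subseteq> cyl t" "X \<in> sets coin"
  shows "l * measure coin X \<le> measure coin (E \<inter> cyl t)"
proof -
  have "l * measure coin X \<le> l * measure coin (cyl t)"
    using assms(2-4) by (intro mult_left_mono coin.finite_measure_mono) auto
  also have "\<dots> \<le> ratio E t * measure coin (cyl t)"
    using assms(1) measure_cyl_pos[of t] by (intro mult_right_mono) auto
  finally show ?thesis by (simp add: measure_Int_cyl)
qed

lemma exceed_upto_children:
  assumes "\<not> l < ratio E t"
  shows "exceed_upto E l t L = exceed_upto E l (t @ [False]) L \<union> exceed_upto E l (t @ [True]) L"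
proof (intro equalityI subsetI)
  fix y assume "y \<in> exceed_upto E l t L"
  then obtain n where n: "y \<in> cyl t" "length t \<le> n" "n \<le> L" "l < ratio E (restr y n)"
    by (auto simp: exceed_upto_def)
  have "n \<noteq> length t" using n(1,4) assms by (auto simp: mem_cyl_iff)
  hence "length (t @ [y (length t)]) \<le> n" using n(2) by simp
  moreover have "y \<in> cyl (t @ [y (length t)])" using n(1) by (simp add: cyl_append)
  ultimately have "y \<in> exceed_upto E l (t @ [y (length t)]) L"
    using n(3,4) unfolding exceed_upto_def by blast
  thus "y \<in> exceed_upto E l (t @ [False]) L \<union> exceed_upto E l (t @ [True]) L"
    by (cases "y (length t)") auto
next
  fix y assume "y \<in> exceed_upto E l (t @ [False]) L \<union> exceed_upto E l (t @ [True]) L"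
  then obtain b n where "y \<in> cyl (t @ [b])" "Suc (length t) \<le> n" "n \<le> L" "l < ratio E (restr y n)"
    by (auto simp: exceed_upto_def)
  moreover from this(1) have "y \<in> cyl t" by (simp add: cyl_append)
  ultimately show "y \<in> exceed_upto E l t L"
    unfolding exceed_upto_def by (blast dest: Suc_leD)
qed

text \<open>Doob's maximal inequality for the ratio martingale, up to level \<open>L\<close> \<dots>\<close>
lemma maxineq_upto:
  assumes E: "E \<in> sets coin" and l: "0 < l"
  shows "l * measure coin (exceed_upto E l t L) \<le> measure coin (E \<inter> cyl t)"
proof (induction "L - length t" arbitrary: t)
  case 0
  show ?case
  proof (cases "l < ratio E t")
    case True
    thus ?thesis using l by (intro measure_le_if_ratio_gt exceed_upto_subset exceed_upto_sets)
  next
    case False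
    hence "exceed_upto E l t L = {}"
      using 0 by (auto simp: exceed_upto_def mem_cyl_iff) (metis order.trans le_antisym)
    thus ?thesis by simp
  qed
next
  case (Suc d)
  show ?case
  proof (cases "l < ratio E t")
    case True
    thus ?thesis using l by (intro measure_le_if_ratio_gt exceed_upto_subset exceed_upto_sets)
  next
    case False
    have disj: "exceed_upto E l (t @ [False]) L \<inter> exceed_upto E l (t @ [True]) L = {}"
      using cyl_children(2)[of t] by (auto simp: exceed_upto_def)
    have "l * measure coin (exceed_upto E l t L) =
        l * measure coin (exceed_upto E l (t @ [False]) L) +
        l * measure coin (exceed_upto E l (t @ [True]) L)"
      unfolding exceed_upto_children[OF False] using disj
      by (simp add: coin.finite_measure_Union distrib_left)
    also have "\<dots> \<le> measure coin (E \<inter> cyl (t @ [False])) + measure coin (E \<inter> cyl (t @ [True]))"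
    proof -
      have "d = L - length (t @ [b])" for b using Suc.hyps(2) by simp
      hence "l * measure coin (exceed_upto E l (t @ [b]) L) \<le> measure coin (E \<inter> cyl (t @ [b]))" for b
        by (rule Suc.hyps(1))
      thus ?thesis by (intro add_mono)
    qed
    also have "\<dots> = measure coin (E \<inter> cyl t)"
      by (rule measure_Int_cyl_children[OF E, symmetric])
    finally show ?thesis .
  qed
qed

lemma maxineq:
  assumes E: "E \<in> sets coin" and l: "0 < l"
  shows "l * measure coin (exceed E l t) \<le> measure coin (E \<inter> cyl t)"
proof -
  have "incseq (exceed_upto E l t)" by (auto simp: incseq_def exceed_upto_def)
  hence "(\<lambda>L. measure coin (exceed_upto E l t L)) \<longlonglongrightarrow> measure coin (exceed E l t)"
    unfolding exceed_eq_UN by (intro coin.finite_Lim_measure_incseq) auto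
  hence "(\<lambda>L. l * measure coin (exceed_upto E l t L)) \<longlonglongrightarrow> l * measure coin (exceed E l t)"
    by (intro tendsto_mult tendsto_const)
  thus ?thesis
    by (rule LIMSEQ_le_const2) (use maxineq_upto[OF E l] in auto)
qed

subsection \<open>Approximation by clopen sets\<close>

definition clopen_approx :: "(nat \<Rightarrow> bool) set \<Rightarrow> bool" where
  "clopen_approx B \<longleftrightarrow> (\<forall>e>0. \<exists>n S. measure coin (sym_diff B {x. restr x n \<in> S}) < e)"

lemma clopen_approxI_determined: "clopen_approx {x. restr x n \<in> S}"
  unfolding clopen_approx_def by (metis Diff_cancel Un_empty_right measure_empty)

lemma clopen_approx_Compl: "clopen_approx B \<Longrightarrow> clopen_approx (- B)"
proof -
  have "sym_diff (- B) {x. restr x n \<in> - S} = sym_diff B {x. restr x n \<in> S}" for n S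
    by auto
  thus "clopen_approx B \<Longrightarrow> clopen_approx (- B)" unfolding clopen_approx_def by metis
qed

lemma clopen_approx_Un:
  assumes A: "A \<in> sets coin" "clopen_approx A" and B: "B \<in> sets coin" "clopen_approx B"
  shows "clopen_approx (A \<union> B)"
  unfolding clopen_approx_def
proof (intro allI impI)
  fix e :: real assume "0 < e"
  then obtain nA SA nB SB where
    nSA: "measure coin (sym_diff A {x. restr x nA \<in> SA}) < e / 2" and
    nSB: "measure coin (sym_diff B {x. restr x nB \<in> SB}) < e / 2"
    using A(2) B(2) unfolding clopen_approx_def by (meson half_gt_zero)
  define T where "T = {u. take nA u \<in> SA \<or> take nB u \<in> SB}"
  have T: "{x. restr x (max nA nB) \<in> T} = {x. restr x nA \<in> SA} \<union> {x. restr x nB \<in> SB}"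
    by (auto simp: T_def take_restr)
  have "measure coin (sym_diff (A \<union> B) {x. restr x (max nA nB) \<in> T})
      \<le> measure coin (sym_diff A {x. restr x nA \<in> SA} \<union> sym_diff B {x. restr x nB \<in> SB})"
    unfolding T using A(1) B(1) by (intro coin.finite_measure_mono) auto
  also have "\<dots> \<le> measure coin (sym_diff A {x. restr x nA \<in> SA})
      + measure coin (sym_diff B {x. restr x nB \<in> SB})"
    using A(1) B(1) by (intro measure_subadditive) auto
  also have "\<dots> < e" using nSA nSB by linarith
  finally show "\<exists>n S. measure coin (sym_diff (A \<union> B) {x. restr x n \<in> S}) < e" by blast
qed

lemma clopen_approx_UN_finite:
  fixes A :: "nat \<Rightarrow> (nat \<Rightarrow> bool) set"
  assumes "\<And>i. A i \<in> sets coin" "\<And>i. clopen_approx (A i)"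
  shows "clopen_approx (\<Union>i<K. A i)"
proof (induction K)
  case 0
  have "(\<Union>i<0. A i) = {x. restr x 0 \<in> {}}" by simp
  thus ?case by (metis clopen_approxI_determined)
next
  case (Suc K)
  thus ?case using assms
    by (simp add: lessThan_Suc clopen_approx_Un sets.finite_UN)
qed

text \<open>A countable union is approximated by one of its finite partial unions.\<close>
lemma clopen_approx_UN:
  fixes A :: "nat \<Rightarrow> (nat \<Rightarrow> bool) set"
  assumes A: "\<And>i. A i \<in> sets coin" "\<And>i. clopen_approx (A i)"
  shows "clopen_approx (\<Union>i. A i)"
  unfolding clopen_approx_def
proof (intro allI impI)
  fix e :: real assume e: "0 < e"
  have "incseq (\<lambda>K. \<Union>i<K. A i)"
    by (auto simp: incseq_def) (meson lessThan_iff order_less_le_trans)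
  moreover have "range (\<lambda>K. \<Union>i<K. A i) \<subseteq> sets coin" using A(1) by (auto intro!: sets.finite_UN)
  moreover have "(\<Union>K. \<Union>i<K. A i) = (\<Union>i. A i)" by blast
  ultimately have "(\<lambda>K. measure coin (\<Union>i<K. A i)) \<longlonglongrightarrow> measure coin (\<Union>i. A i)"
    using coin.finite_Lim_measure_incseq[of "\<lambda>K. \<Union>i<K. A i"] by simp
  then obtain K where "\<bar>measure coin (\<Union>i<K. A i) - measure coin (\<Union>i. A i)\<bar> < e / 2"
    using e by (auto dest!: LIMSEQ_D[of _ _ "e / 2"])
  hence K: "measure coin (\<Union>i. A i) - measure coin (\<Union>i<K. A i) < e / 2" by linarith
  obtain n S where nS: "measure coin (sym_diff (\<Union>i<K. A i) {x. restr x n \<in> S}) < e / 2"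
    using clopen_approx_UN_finite[OF A, where K=K] e unfolding clopen_approx_def by (meson half_gt_zero)
  have "measure coin (sym_diff (\<Union>i. A i) {x. restr x n \<in> S})
      \<le> measure coin (((\<Union>i. A i) - (\<Union>i<K. A i)) \<union> sym_diff (\<Union>i<K. A i) {x. restr x n \<in> S})"
    using A(1) by (intro coin.finite_measure_mono) auto
  also have "\<dots> \<le> measure coin ((\<Union>i. A i) - (\<Union>i<K. A i))
      + measure coin (sym_diff (\<Union>i<K. A i) {x. restr x n \<in> S})"
    using A(1) by (intro measure_subadditive) auto
  also have "\<dots> < e"
  proof -
    have "measure coin ((\<Union>i. A i) - (\<Union>i<K. A i)) = measure coin (\<Union>i. A i) - measure coin (\<Union>i<K. A i)"
      using A(1) by (intro coin.finite_measure_Diff) auto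
    thus ?thesis using K nS by linarith
  qed
  finally show "\<exists>n S. measure coin (sym_diff (\<Union>i. A i) {x. restr x n \<in> S}) < e" by blast
qed

lemma clopen_approx_sets:
  assumes "B \<in> sets coin"
  shows "clopen_approx B"
proof -
  have "B \<in> sigma_sets UNIV {{x. x i \<in> C} | i C. True}" using assms by (simp add: sets_coin_eq)
  thus ?thesis
  proof (induction rule: sigma_sets.induct)
    case (Basic a)
    then obtain i C where "a = {x. x i \<in> C}" by auto
    hence "a = {x. restr x (Suc i) \<in> {u. u ! i \<in> C}}" by simp
    thus ?case by (metis clopen_approxI_determined)
  next
    case Empty
    have "{} = {x. restr x 0 \<in> {}}" by simp
    thus ?case by (metis clopen_approxI_determined)
  next
    case (Compl a)
    thus ?case using clopen_approx_Compl by (simp add: Compl_eq_Diff_UNIV[symmetric])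
  next
    case (Union a)
    thus ?case by (intro clopen_approx_UN) (simp_all add: sets_coin_eq)
  qed
qed

subsection \<open>The Lebesgue density theorem\<close>

definition dens :: "(nat \<Rightarrow> bool) set \<Rightarrow> (nat \<Rightarrow> bool) set" where
  "dens B = {x. (\<lambda>n. ratio B (restr x n)) \<longlonglongrightarrow> 1}"

text \<open>For sequences bounded by \<open>1\<close>, convergence to \<open>1\<close> is a countable conjunction of
  eventual lower bounds; this makes \<open>dens B\<close> a \<open>\<Pi>\<^sup>0\<^sub>3\<close> set.\<close>
lemma tendsto_1_iff_eventually_ge:
  fixes f :: "nat \<Rightarrow> real"
  assumes le: "\<And>n. f n \<le> 1"
  shows "f \<longlonglongrightarrow> 1 \<longleftrightarrow> (\<forall>k. \<forall>\<^sub>F n in sequentially. 1 - inverse (real (Suc k)) \<le> f n)"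
proof
  assume lim: "f \<longlonglongrightarrow> 1"
  show "\<forall>k. \<forall>\<^sub>F n in sequentially. 1 - inverse (real (Suc k)) \<le> f n"
  proof
    fix k
    have "1 - inverse (real (Suc k)) < 1" by simp
    from order_tendstoD(1)[OF lim this]
    show "\<forall>\<^sub>F n in sequentially. 1 - inverse (real (Suc k)) \<le> f n"
      by eventually_elim simp
  qed
next
  assume ev: "\<forall>k. \<forall>\<^sub>F n in sequentially. 1 - inverse (real (Suc k)) \<le> f n"
  show "f \<longlonglongrightarrow> 1"
  proof (rule order_tendstoI)
    fix a :: real assume "a < 1"
    then obtain k where k: "inverse (real (Suc k)) < 1 - a"
      using ex_inverse_of_nat_less[of "1 - a"] by (metis diff_gt_0_iff_gt gr0_implies_Suc)
    show "\<forall>\<^sub>F n in sequentially. a < f n"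
      using ev[rule_format, of k] by eventually_elim (use k in linarith)
  next
    fix a :: real assume "1 < a"
    hence "f n < a" for n using le[of n] by linarith
    thus "\<forall>\<^sub>F n in sequentially. f n < a" by simp
  qed
qed

lemma dens_iff_eventually_ge:
  "B \<in> sets coin \<Longrightarrow>
    x \<in> dens B \<longleftrightarrow> (\<forall>k. \<forall>\<^sub>F n in sequentially. 1 - inverse (real (Suc k)) \<le> ratio B (restr x n))"
  unfolding dens_def by (simp add: tendsto_1_iff_eventually_ge ratio_le_1)

lemma tendsto_one_minus_0_iff:
  fixes f :: "nat \<Rightarrow> real"
  shows "(\<lambda>n. 1 - f n) \<longlonglongrightarrow> 0 \<longleftrightarrow> f \<longlonglongrightarrow> 1"
  using tendsto_diff[OF tendsto_const[of 1], of "\<lambda>n. 1 - f n" 0 sequentially]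
    tendsto_diff[OF tendsto_const[of 1], of f 1 sequentially]
  by auto

lemma dens_iff_compl_tendsto_0:
  assumes "B \<in> sets coin"
  shows "x \<in> dens B \<longleftrightarrow> (\<lambda>n. ratio (- B) (restr x n)) \<longlonglongrightarrow> 0"
  by (simp add: dens_def ratio_compl[OF assms] tendsto_one_minus_0_iff)

lemma Pi03_dens:
  assumes B: "B \<in> sets coin"
  shows "Pi03 (dens B)"
proof -
  define F where "F k N = {x. \<forall>n\<ge>N. 1 - inverse (real (Suc k)) \<le> ratio B (restr x n)}" for k N
  have "closed (F k N)" for k N
  proof -
    have "F k N = (\<Inter>n\<in>{N..}. {x. 1 - inverse (real (Suc k)) \<le> ratio B (restr x n)})"
      by (auto simp: F_def)
    thus ?thesis by (auto intro!: closed_INT closed_restr_pred)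
  qed
  moreover have "dens B = (\<Inter>k. \<Union>N. F k N)"
    by (auto simp: dens_iff_eventually_ge[OF B] eventually_sequentially F_def)
  ultimately show ?thesis unfolding Pi03_def by blast
qed

text \<open>The set of points of \<open>B\<close> along which the ratio of \<open>B\<close> frequently drops below
  \<open>1 - l\<close> has arbitrarily small outer measure: approximate \<open>B\<close> by a clopen set \<open>C\<close>; inside \<open>C\<close>
  a drop of the ratio of \<open>B\<close> is an excess of the ratio of \<open>C - B\<close>, controlled by \<open>maxineq\<close>.\<close>
lemma frequent_drop_small:
  assumes B: "B \<in> sets coin" and l: "0 < l" and e: "0 < e"
  shows "\<exists>M\<in>sets coin. {x\<in>B. \<exists>\<^sub>F n in sequentially. ratio B (restr x n) < 1 - l} \<subseteq> M \<and>
    measure coin M \<le> e"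
proof -
  define e' where "e' = e * l / (l + 1)"
  have "e' + e' / l = e * l / (l + 1) + e / (l + 1)" using l by (simp add: e'_def)
  also have "\<dots> = e * (l + 1) / (l + 1)" by (simp add: add_divide_distrib[symmetric] algebra_simps)
  also have "\<dots> = e" using l by simp
  finally have e': "0 < e'" "e' + e' / l = e" using e l by (auto simp: e'_def)
  obtain n S where nS: "measure coin (sym_diff B {x. restr x n \<in> S}) < e'"
    using clopen_approx_sets[OF B] e'(1) unfolding clopen_approx_def by blast
  define C where "C = {x. restr x n \<in> S}"
  have C: "C \<in> sets coin" "C - B \<in> sets coin" using B by (auto simp: C_def)
  define M where "M = (B - C) \<union> exceed (C - B) l []"
  have "{x\<in>B. \<exists>\<^sub>F n in sequentially. ratio B (restr x n) < 1 - l} \<subseteq> M"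
  proof
    fix x assume x: "x \<in> {x\<in>B. \<exists>\<^sub>F n in sequentially. ratio B (restr x n) < 1 - l}"
    show "x \<in> M"
    proof (cases "x \<in> C")
      case True
      obtain m where m: "n \<le> m" "ratio B (restr x m) < 1 - l"
        using x by (auto simp: frequently_sequentially)
      have "cyl (restr x m) \<subseteq> C"
        using True m(1) by (auto simp: C_def mem_cyl_iff take_restr[symmetric])
      hence "(C - B) \<inter> cyl (restr x m) = - B \<inter> cyl (restr x m)" by blast
      hence "ratio (C - B) (restr x m) = ratio (- B) (restr x m)" by (simp add: ratio_def)
      hence "ratio (C - B) (restr x m) = 1 - ratio B (restr x m)" by (simp add: ratio_compl[OF B])
      hence "l < ratio (C - B) (restr x m)" using m(2) by simp
      hence "x \<in> exceed (C - B) l []" by (auto simp: exceed_def cyl_def)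
      thus ?thesis by (simp add: M_def)
    qed (use x in \<open>simp add: M_def\<close>)
  qed
  moreover have "measure coin M \<le> e"
  proof -
    have "measure coin (B - C) \<le> measure coin (sym_diff B C)" "measure coin (C - B) \<le> measure coin (sym_diff B C)"
      using B C by (intro coin.finite_measure_mono; auto)+
    hence sd: "measure coin (B - C) \<le> e'" "measure coin (C - B) \<le> e'"
      using nS unfolding C_def by linarith+
    have "l * measure coin (exceed (C - B) l []) \<le> measure coin (C - B)"
      using maxineq[OF C(2) l, of "[]"] by (simp add: cyl_def)
    hence "measure coin (exceed (C - B) l []) \<le> e' / l"
      using sd(2) l by (simp add: field_simps)
    moreover have "measure coin M \<le> measure coin (B - C) + measure coin (exceed (C - B) l [])"
      unfolding M_def using B C by (intro measure_subadditive) auto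
    ultimately show ?thesis using sd(1) e'(2) by linarith
  qed
  moreover have "M \<in> sets coin" using B C by (simp add: M_def)
  ultimately show ?thesis by blast
qed

lemma AE_not_in_if_small_covers:
  assumes "\<And>e. 0 < e \<Longrightarrow> \<exists>M\<in>sets coin. Z \<subseteq> M \<and> measure coin M \<le> e"
  shows "AE x in coin. x \<notin> Z"
proof -
  obtain M where M: "\<And>j. M j \<in> sets coin" "\<And>j. Z \<subseteq> M j"
      "\<And>j. measure coin (M j) \<le> inverse (real (Suc j))"
    using assms[of "inverse (real (Suc _))"] by (metis inverse_positive_iff_positive of_nat_0_less_iff zero_less_Suc)
  have "measure coin (\<Inter>j. M j) \<le> inverse (real (Suc j))" for j
  proof -
    have "measure coin (\<Inter>j. M j) \<le> measure coin (M j)"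
      using M(1) by (intro coin.finite_measure_mono) auto
    thus ?thesis using M(3)[of j] by linarith
  qed
  hence "measure coin (\<Inter>j. M j) \<le> 0"
    by (intro LIMSEQ_le_const[OF LIMSEQ_inverse_real_of_nat]) auto
  hence "emeasure coin (\<Inter>j. M j) = 0"
    using M(1) by (simp add: coin.emeasure_eq_measure measure_nonneg antisym)
  thus ?thesis using M by (intro AE_I[of _ _ "\<Inter>j. M j"]) auto
qed

theorem lebesgue_density:
  assumes B: "B \<in> sets coin"
  shows "AE x in coin. x \<in> B \<longrightarrow> x \<in> dens B"
proof -
  have "AE x in coin. x \<in> B \<longrightarrow> (\<forall>\<^sub>F n in sequentially. 1 - inverse (real (Suc k)) \<le> ratio B (restr x n))"
    for k
  proof -
    have "AE x in coin. x \<notin> {x\<in>B. \<exists>\<^sub>F n in sequentially. ratio B (restr x n) < 1 - inverse (real (Suc k))}"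
      by (rule AE_not_in_if_small_covers) (rule frequent_drop_small[OF B]; simp)
    thus ?thesis by eventually_elim (auto simp: not_frequently not_less)
  qed
  hence "AE x in coin. \<forall>k. x \<in> B \<longrightarrow> (\<forall>\<^sub>F n in sequentially. 1 - inverse (real (Suc k)) \<le> ratio B (restr x n))"
    unfolding AE_all_countable by blast
  thus ?thesis by eventually_elim (simp add: dens_iff_eventually_ge[OF B])
qed

lemma AE_witness:
  assumes "X \<in> sets coin" "0 < measure coin X" "AE x in coin. P x"
  shows "\<exists>x\<in>X. P x"
proof (rule ccontr)
  assume none: "\<not> (\<exists>x\<in>X. P x)"
  have "AE x in coin. x \<notin> X" using assms(3) by eventually_elim (use none in blast)
  hence "emeasure coin X = 0" using AE_iff_measurable[OF assms(1), of "\<lambda>x. x \<notin> X"] by simp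
  thus False using assms(2) by (simp add: coin.emeasure_eq_measure)
qed

text \<open>The two basic moves of the reduction, for a measurable \<open>S\<close>: starting from a string
  where the complement of \<open>S\<close> is rare, one can extend it so that the ratio of \<open>- S\<close>
  (i) \<^emph>\<open>dips\<close>, i.e. rises to about \<open>p\<close>, if \<open>- S\<close> has positive measure in the current cylinder,
  or (ii) \<^emph>\<open>climbs\<close> back below any \<open>q > 0\<close> while never exceeding \<open>l\<close>.  Both follow from the
  density theorem, the second also from the maximal inequality.\<close>

definition low_along :: "(nat \<Rightarrow> bool) set \<Rightarrow> real \<Rightarrow> bool list \<Rightarrow> bool list \<Rightarrow> bool" where
  "low_along T l s u \<longleftrightarrow> (\<forall>n. length s \<le> n \<and> n \<le> length u \<longrightarrow> ratio T (take n u) \<le> l)"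

lemma prefix_restr: "y \<in> cyl s \<Longrightarrow> length s \<le> n \<Longrightarrow> prefix s (restr y n)"
  by (metis mem_cyl_iff take_restr take_is_prefix)

lemma dip_exists:
  assumes S: "S \<in> sets coin" and pos: "0 < measure coin (cyl s - S)"
    and p: "0 < p" "p < 1" and ws: "ratio (- S) s < p"
  shows "\<exists>u. prefix s u \<and> length s < length u \<and> p \<le> ratio (- S) u \<and> ratio (- S) u \<le> 2 * p \<and>
    (\<forall>n. length s \<le> n \<and> n < length u \<longrightarrow> ratio (- S) (take n u) < p)"
proof -
  have "cyl s - S = - S \<inter> cyl s" by blast
  then obtain y where y: "y \<in> cyl s" "y \<in> dens (- S)"
    using AE_witness[OF _ pos lebesgue_density[of "- S"]] S by auto
  have "eventually (\<lambda>n. p < ratio (- S) (restr y n)) sequentially"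
    using y(2) p(2) by (auto simp: dens_def intro: order_tendstoD(1))
  then obtain N where N: "\<forall>n\<ge>N. p < ratio (- S) (restr y n)"
    by (auto simp: eventually_sequentially)
  have ex: "\<exists>n. length s \<le> n \<and> p \<le> ratio (- S) (restr y n)"
    using N[rule_format, OF max.cobounded1, of "length s"]
    by (intro exI[of _ "max N (length s)"]) auto
  define n0 where "n0 = (LEAST n. length s \<le> n \<and> p \<le> ratio (- S) (restr y n))"
  have n0: "length s \<le> n0" "p \<le> ratio (- S) (restr y n0)"
    using LeastI_ex[OF ex] by (simp_all add: n0_def)
  have below: "ratio (- S) (restr y n) < p" if "length s \<le> n" "n < n0" for n
    using not_less_Least[of n "\<lambda>n. length s \<le> n \<and> p \<le> ratio (- S) (restr y n)"] that
    unfolding n0_def[symmetric] by auto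
  have rs: "restr y (length s) = s" using y(1) by (simp add: mem_cyl_iff)
  have "n0 \<noteq> length s" using n0(2) ws rs by auto
  then obtain m where m: "n0 = Suc m" "length s \<le> m" using n0(1) by (cases n0) auto
  have "ratio (- S) (restr y n0) \<le> 2 * ratio (- S) (restr y m)"
    unfolding m(1) restr_Suc using S by (intro ratio_child_le) auto
  hence "ratio (- S) (restr y n0) \<le> 2 * p" using below[of m] m by simp
  thus ?thesis
    using n0 m below prefix_restr[OF y(1) n0(1)]
    by (intro exI[of _ "restr y n0"]) (auto simp: take_restr)
qed

text \<open>Points of \<open>S\<close> below \<open>t\<close> that avoid the exceedance set of \<open>- S\<close> have positive measure:
  \<open>S\<close> fills three quarters of \<open>cyl t\<close>, the exceedance set at most a quarter.\<close>
lemma measure_good_points_pos: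
  assumes S: "S \<in> sets coin" and l: "0 < l" "l \<le> 1" and wt: "ratio (- S) t \<le> l / 4"
  shows "0 < measure coin (S \<inter> cyl t - exceed (- S) l t)"
proof -
  let ?B = "exceed (- S) l t"
  have "l * measure coin ?B \<le> measure coin (- S \<inter> cyl t)"
    using S l by (intro maxineq) auto
  also have "\<dots> \<le> l / 4 * measure coin (cyl t)"
    unfolding measure_Int_cyl using wt measure_cyl_pos[of t] by (intro mult_right_mono) auto
  finally have B: "measure coin ?B \<le> measure coin (cyl t) / 4" using l by (simp add: field_simps)
  have "measure coin (S \<inter> cyl t) = (1 - ratio (- S) t) * measure coin (cyl t)"
    by (simp add: measure_Int_cyl ratio_compl[OF S])
  also have "\<dots> \<ge> 3 / 4 * measure coin (cyl t)"
    using wt l measure_cyl_pos[of t] by (intro mult_right_mono) auto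
  finally have "3 / 4 * measure coin (cyl t) \<le> measure coin (S \<inter> cyl t)" .
  moreover have "measure coin (S \<inter> cyl t) \<le> measure coin (S \<inter> cyl t - ?B) + measure coin ?B"
    using S by (intro order.trans[OF coin.finite_measure_mono measure_subadditive]) auto
  ultimately show ?thesis using B measure_cyl_pos[of t] by linarith
qed

text \<open>A density point of \<open>S\<close> outside the exceedance set yields the climbing extension.\<close>
lemma climb_exists:
  assumes S: "S \<in> sets coin" and l: "0 < l" "l \<le> 1" and wt: "ratio (- S) t \<le> l / 4"
    and q: "0 < q"
  shows "\<exists>u. prefix t u \<and> length t < length u \<and> ratio (- S) u \<le> q \<and> low_along (- S) l t u"
proof -
  obtain y where y: "y \<in> S \<inter> cyl t - exceed (- S) l t" "y \<in> dens S"
    using AE_witness[OF _ measure_good_points_pos[OF S l wt] lebesgue_density[OF S]] S by auto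
  have "(\<lambda>n. ratio (- S) (restr y n)) \<longlonglongrightarrow> 0"
    using y(2) dens_iff_compl_tendsto_0[OF S] by simp
  hence "eventually (\<lambda>n. ratio (- S) (restr y n) < q) sequentially"
    using q by (rule order_tendstoD(2))
  then obtain N where N: "\<forall>n\<ge>N. ratio (- S) (restr y n) < q"
    by (auto simp: eventually_sequentially)
  define n where "n = max N (Suc (length t))"
  have "ratio (- S) (restr y k) \<le> l" if "length t \<le> k" for k
    using y(1) that by (auto simp: exceed_def not_less)
  hence "low_along (- S) l t (restr y n)" by (auto simp: low_along_def take_restr)
  moreover have "prefix t (restr y n)" using y(1) by (intro prefix_restr) (auto simp: n_def)
  moreover have "ratio (- S) (restr y n) < q" using N[rule_format, OF max.cobounded1] by (simp add: n_def)
  ultimately show ?thesis by (intro exI[of _ "restr y n"]) (auto simp: n_def)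
qed

subsection \<open>Recognising \<open>\<Sigma>\<^sup>0\<^sub>2\<close> sets by counting changes\<close>

lemma finite_changes_iff_bounded:
  fixes f :: "nat \<Rightarrow> nat"
  assumes mono: "incseq f"
  shows "finite {t. f (Suc t) \<noteq> f t} \<longleftrightarrow> (\<exists>B. \<forall>k. f k \<le> B)"
proof
  assume "finite {t. f (Suc t) \<noteq> f t}"
  then obtain T where "\<forall>t\<in>{t. f (Suc t) \<noteq> f t}. t < T"
    unfolding finite_nat_set_iff_bounded by blast
  hence T: "\<And>t. T \<le> t \<Longrightarrow> f (Suc t) = f t" by auto
  have const: "f (T + d) = f T" for d
    by (induction d) (simp_all add: T)
  have "f k \<le> f T" for k
  proof (cases "k \<le> T")
    case True thus ?thesis using mono by (simp add: incseq_def)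
  next
    case False thus ?thesis using const[of "k - T"] by simp
  qed
  thus "\<exists>B. \<forall>k. f k \<le> B" by blast
next
  assume "\<exists>B. \<forall>k. f k \<le> B"
  then obtain B where B: "\<And>k. f k \<le> B" by blast
  have count: "card {t. t < k \<and> f (Suc t) \<noteq> f t} \<le> f k" for k
  proof (induction k)
    case (Suc k)
    show ?case
    proof (cases "f (Suc k) \<noteq> f k")
      case True
      hence "{t. t < Suc k \<and> f (Suc t) \<noteq> f t} = insert k {t. t < k \<and> f (Suc t) \<noteq> f t}"
        by (auto simp: less_Suc_eq)
      moreover have "f k < f (Suc k)" using True mono by (simp add: incseq_Suc_iff order_less_le)
      ultimately show ?thesis using Suc.IH by simp
    next
      case False
      hence "{t. t < Suc k \<and> f (Suc t) \<noteq> f t} = {t. t < k \<and> f (Suc t) \<noteq> f t}"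
        by (auto simp: less_Suc_eq)
      thus ?thesis using Suc.IH False by simp
    qed
  qed simp
  show "finite {t. f (Suc t) \<noteq> f t}"
  proof (rule ccontr)
    assume "infinite {t. f (Suc t) \<noteq> f t}"
    then obtain X where X: "finite X" "card X = Suc B" "X \<subseteq> {t. f (Suc t) \<noteq> f t}"
      using infinite_arbitrarily_large by blast
    hence "X \<subseteq> {t. t < Suc (Max X) \<and> f (Suc t) \<noteq> f t}"
      by (auto simp: less_Suc_eq_le intro: Max_ge)
    hence "card X \<le> card {t. t < Suc (Max X) \<and> f (Suc t) \<noteq> f t}" by (intro card_mono) auto
    thus False using count[of "Suc (Max X)"] B[of "Suc (Max X)"] X(2) by simp
  qed
qed

text \<open>For a sequence of pieces \<open>F\<close>, \<open>hit F x k\<close> is the least index of a piece meeting the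
  \<open>k\<close>-th cylinder around \<open>x\<close>, capped at \<open>k\<close>.  It depends only on \<open>restr x k\<close>, it is
  monotone in \<open>k\<close>, and it stays bounded iff \<open>x\<close> lies in one of the (closed) pieces.\<close>
definition hit :: "(nat \<Rightarrow> (nat \<Rightarrow> bool) set) \<Rightarrow> (nat \<Rightarrow> bool) \<Rightarrow> nat \<Rightarrow> nat" where
  "hit F x k = (LEAST n. k \<le> n \<or> cyl (restr x k) \<inter> F n \<noteq> {})"

lemma hit_le: "hit F x k \<le> k"
  unfolding hit_def by (rule Least_le) simp

lemma hit_restr: "restr x k = restr y k \<Longrightarrow> hit F x k = hit F y k"
  unfolding hit_def by (simp only:)

lemma hit_incseq: "incseq (hit F x)"
proof (rule incseq_SucI)
  fix k
  let ?P = "\<lambda>k n. k \<le> n \<or> cyl (restr x k) \<inter> F n \<noteq> {}"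
  have "?P (Suc k) (hit F x (Suc k))"
    unfolding hit_def by (rule LeastI[of _ "Suc k"]) simp
  thus "hit F x k \<le> hit F x (Suc k)"
  proof
    assume "Suc k \<le> hit F x (Suc k)"
    thus ?thesis using hit_le[of F x k] by simp
  next
    assume "cyl (restr x (Suc k)) \<inter> F (hit F x (Suc k)) \<noteq> {}"
    hence "?P k (hit F x (Suc k))" using cyl_restr_mono[of k "Suc k" x] by auto
    thus ?thesis unfolding hit_def by (rule Least_le)
  qed
qed

lemma hit_le_if_mem: "x \<in> F j \<Longrightarrow> hit F x k \<le> j"
  unfolding hit_def by (rule Least_le) (use self_in_cyl[of x k] in blast)

lemma hit_unbounded:
  assumes closed: "\<And>j. closed (F j)" and x: "\<And>j. x \<notin> F j"
  shows "\<exists>k. B < hit F x k"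
proof -
  have "open (- (\<Union>j\<le>B. F j))" using closed by auto
  moreover have "x \<in> - (\<Union>j\<le>B. F j)" using x by auto
  ultimately obtain k0 where k0: "cyl (restr x k0) \<subseteq> - (\<Union>j\<le>B. F j)"
    by (rule open_contains_cyl[THEN exE])
  define k where "k = max k0 (Suc B)"
  have "cyl (restr x k) \<subseteq> - (\<Union>j\<le>B. F j)"
    using k0 cyl_restr_mono[of k0 k x] by (auto simp: k_def)
  hence none: "\<not> (k \<le> n \<or> cyl (restr x k) \<inter> F n \<noteq> {})" if "n \<le> B" for n
    using that by (auto simp: k_def)
  have "k \<le> hit F x k \<or> cyl (restr x k) \<inter> F (hit F x k) \<noteq> {}"
    unfolding hit_def by (rule LeastI[of _ k]) simp
  hence "\<not> hit F x k \<le> B" using none by blast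
  thus ?thesis by (intro exI[of _ k]) simp
qed

definition jump :: "(nat \<Rightarrow> (nat \<Rightarrow> bool) set) \<Rightarrow> (nat \<Rightarrow> bool) \<Rightarrow> nat \<Rightarrow> bool" where
  "jump F x t \<longleftrightarrow> hit F x (Suc t) \<noteq> hit F x t"

lemma jump_restr: "restr x (Suc t) = restr y (Suc t) \<Longrightarrow> jump F x t = jump F y t"
  unfolding jump_def using hit_restr[of x "Suc t" y] hit_restr[of x t y]
  by (metis le_SucI order_refl take_restr)

lemma mem_UN_iff_finite_jumps:
  assumes closed: "\<And>j. closed (F j)"
  shows "(\<exists>j. x \<in> F j) \<longleftrightarrow> finite {t. jump F x t}"
proof -
  have "(\<exists>j. x \<in> F j) \<longleftrightarrow> (\<exists>B. \<forall>k. hit F x k \<le> B)"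
  proof
    assume "\<exists>j. x \<in> F j"
    thus "\<exists>B. \<forall>k. hit F x k \<le> B" using hit_le_if_mem by blast
  next
    assume "\<exists>B. \<forall>k. hit F x k \<le> B"
    then obtain B where B: "\<And>k. hit F x k \<le> B" by blast
    show "\<exists>j. x \<in> F j"
    proof (rule ccontr)
      assume "\<nexists>j. x \<in> F j"
      then obtain k where "B < hit F x k" using hit_unbounded[of F x B] closed by blast
      thus False using B[of k] by simp
    qed
  qed
  thus ?thesis
    unfolding jump_def finite_changes_iff_bounded[OF hit_incseq] .
qed

subsection \<open>The reduction of a \<open>\<Pi>\<^sup>0\<^sub>3\<close> set to \<open>dens S\<close>\<close>

text \<open>Let \<open>Y = (\<Inter>m. \<Union>n. F m n)\<close> with closed \<open>F m n\<close>.  The image of \<open>x\<close> is built as the limit of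
  a sequence of strings.  Stage \<open>k\<close> treats the pair \<open>(m, t) = prod_decode k\<close>: if \<open>t\<close> is a jump
  of row \<open>m\<close> for \<open>x\<close>, the ratio of \<open>- S\<close> is made to dip to \<open>(1/2)^(m+3)\<close> (but not above
  \<open>(1/2)^m\<close>); otherwise it stays below \<open>4 * tol k\<close>.  In both cases the stage ends with ratio at
  most \<open>tol (Suc k)\<close>.  So the ratio tends to \<open>0\<close> iff every row jumps finitely often, i.e.
  iff \<open>x \<in> Y\<close>.\<close>

definition tol :: "nat \<Rightarrow> real" where
  "tol k = (1/2) ^ (k + 4)"

definition climb_ext :: "(nat \<Rightarrow> bool) set \<Rightarrow> nat \<Rightarrow> bool list \<Rightarrow> bool list" where
  "climb_ext S k s = (SOME u. prefix s u \<and> length s < length u \<and> ratio (- S) u \<le> tol (Suc k) \<and>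
     low_along (- S) (4 * tol k) s u)"

definition dip_ext :: "(nat \<Rightarrow> bool) set \<Rightarrow> nat \<Rightarrow> nat \<Rightarrow> bool list \<Rightarrow> bool list" where
  "dip_ext S k m s = (SOME u. prefix s u \<and> length s < length u \<and> ratio (- S) u \<le> tol (Suc k) \<and>
     low_along (- S) ((1/2) ^ m) s u \<and>
     (\<exists>n. length s < n \<and> n \<le> length u \<and> (1/2) ^ (m + 3) \<le> ratio (- S) (take n u)))"

lemma climb_ext_spec:
  assumes S: "S \<in> sets coin" and s: "ratio (- S) s \<le> tol k"
  shows "prefix s (climb_ext S k s) \<and> length s < length (climb_ext S k s) \<and>
    ratio (- S) (climb_ext S k s) \<le> tol (Suc k) \<and> low_along (- S) (4 * tol k) s (climb_ext S k s)"
  unfolding climb_ext_def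
proof (rule someI_ex, rule climb_exists[OF S])
  have "(1/2::real) ^ k \<le> 1" by (simp add: power_le_one)
  thus "0 < 4 * tol k" "4 * tol k \<le> 1" by (simp_all add: tol_def power_add eval_nat_numeral)
qed (use s in \<open>simp_all add: tol_def\<close>)

lemma prefix_take_eq: "prefix u v \<Longrightarrow> n \<le> length u \<Longrightarrow> take n v = take n u"
  by (auto simp: prefix_def)

lemma low_along_trans:
  assumes "prefix u v" "low_along T l s u" "low_along T l u v"
  shows "low_along T l s v"
  unfolding low_along_def
proof (intro allI impI)
  fix n assume n: "length s \<le> n \<and> n \<le> length v"
  show "ratio T (take n v) \<le> l"
  proof (cases "n \<le> length u")
    case True
    thus ?thesis using assms(2) n prefix_take_eq[OF assms(1) True] by (simp add: low_along_def)
  next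
    case False
    thus ?thesis using assms(3) n by (simp add: low_along_def)
  qed
qed

lemma dip_ext_spec:
  assumes S: "S \<in> sets coin" and pos: "\<And>s. 0 < measure coin (cyl s - S)"
    and mk: "m \<le> k" and s: "ratio (- S) s \<le> tol k"
  shows "prefix s (dip_ext S k m s) \<and> length s < length (dip_ext S k m s) \<and>
    ratio (- S) (dip_ext S k m s) \<le> tol (Suc k) \<and> low_along (- S) ((1/2) ^ m) s (dip_ext S k m s) \<and>
    (\<exists>n. length s < n \<and> n \<le> length (dip_ext S k m s) \<and>
       (1/2) ^ (m + 3) \<le> ratio (- S) (take n (dip_ext S k m s)))"
  unfolding dip_ext_def
proof (rule someI_ex)
  define p :: real where "p = (1/2) ^ (m + 3)"
  define l :: real where "l = (1/2) ^ m"
  have l: "0 < l" "l \<le> 1" "2 * p = l / 4" "p \<le> l"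
    by (simp_all add: l_def p_def power_le_one power_add eval_nat_numeral)
  have "tol k \<le> (1/2) ^ (m + 4)" unfolding tol_def by (rule power_decreasing) (use mk in auto)
  also have "\<dots> < p" by (simp add: p_def power_add)
  finally have "ratio (- S) s < p" using s by simp
  moreover have "0 < p" "p < 1" using l by auto
  ultimately obtain u1 where u1: "prefix s u1" "length s < length u1" "p \<le> ratio (- S) u1"
      "ratio (- S) u1 \<le> 2 * p" "\<forall>n. length s \<le> n \<and> n < length u1 \<longrightarrow> ratio (- S) (take n u1) < p"
    using dip_exists[OF S pos] by blast
  obtain u2 where u2: "prefix u1 u2" "length u1 < length u2" "ratio (- S) u2 \<le> tol (Suc k)"
      "low_along (- S) l u1 u2"
    using climb_exists[OF S l(1,2), of u1 "tol (Suc k)"] u1(4) l(3) by (auto simp: tol_def)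
  have "low_along (- S) l s u1"
    unfolding low_along_def
  proof (intro allI impI)
    fix n assume n: "length s \<le> n \<and> n \<le> length u1"
    show "ratio (- S) (take n u1) \<le> l"
    proof (cases "n = length u1")
      case True
      thus ?thesis using u1(4) l(1,3) by simp
    next
      case False
      hence "ratio (- S) (take n u1) < p" using u1(5) n by simp
      thus ?thesis using l(4) by linarith
    qed
  qed
  hence "low_along (- S) l s u2" by (rule low_along_trans[OF u2(1) _ u2(4)])
  moreover have "take (length u1) u2 = u1" using u2(1) by (auto simp: prefix_def)
  ultimately show "\<exists>u. prefix s u \<and> length s < length u \<and> ratio (- S) u \<le> tol (Suc k) \<and>
     low_along (- S) ((1/2) ^ m) s u \<and>
     (\<exists>n. length s < n \<and> n \<le> length u \<and> (1/2) ^ (m + 3) \<le> ratio (- S) (take n u))"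
    using u1(1-3) u2(1-3) prefix_order.trans[OF u1(1) u2(1)] unfolding l_def p_def
    by (intro exI[of _ u2] conjI exI[of _ "length u1"]) auto
qed

primrec strings :: "(nat \<Rightarrow> bool) set \<Rightarrow> (nat \<Rightarrow> nat \<Rightarrow> (nat \<Rightarrow> bool) set) \<Rightarrow> bool list \<Rightarrow>
    (nat \<Rightarrow> bool) \<Rightarrow> nat \<Rightarrow> bool list" where
  "strings S F s0 x 0 = s0"
| "strings S F s0 x (Suc k) =
    (if jump (F (fst (prod_decode k))) x (snd (prod_decode k))
     then dip_ext S k (fst (prod_decode k)) (strings S F s0 x k)
     else climb_ext S k (strings S F s0 x k))"

definition reduction :: "(nat \<Rightarrow> bool) set \<Rightarrow> (nat \<Rightarrow> nat \<Rightarrow> (nat \<Rightarrow> bool) set) \<Rightarrow> bool list \<Rightarrow>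
    (nat \<Rightarrow> bool) \<Rightarrow> (nat \<Rightarrow> bool)" where
  "reduction S F s0 x i = strings S F s0 x (Suc i) ! i"

text \<open>Stage \<open>k\<close> only looks at \<open>restr x k\<close>, since \<open>snd (prod_decode k) < k\<close> unless \<open>k = 0\<close>.\<close>
lemma strings_restr: "restr x k = restr y k \<Longrightarrow> strings S F s0 x k = strings S F s0 y k"
proof (induction k)
  case (Suc k)
  have "restr x k = restr y k" using Suc.prems by (metis take_restr le_SucI order_refl)
  moreover have "snd (prod_decode k) \<le> k"
    by (metis le_prod_encode_2 prod.collapse prod_decode_inverse)
  hence "restr x (Suc (snd (prod_decode k))) = restr y (Suc (snd (prod_decode k)))"
    using Suc.prems by (metis take_restr Suc_le_mono)
  hence "jump (F m) x (snd (prod_decode k)) = jump (F m) y (snd (prod_decode k))" for m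
    by (rule jump_restr)
  ultimately show ?case using Suc.IH by simp
qed simp

lemma fst_prod_decode_le: "fst (prod_decode k) \<le> k"
  by (metis le_prod_encode_1 prod.collapse prod_decode_inverse)

lemma strict_mono_locate:
  fixes L :: "nat \<Rightarrow> nat"
  assumes L: "strict_mono L" and n: "L K \<le> n"
  shows "\<exists>k\<ge>K. L k \<le> n \<and> n < L (Suc k)"
proof -
  have ex: "\<exists>j. n < L j" using seq_suble[OF L, of "Suc n"] by (intro exI[of _ "Suc n"]) simp
  define j where "j = (LEAST j. n < L j)"
  have j: "n < L j" using LeastI_ex[OF ex] by (simp add: j_def)
  have "K < j"
  proof (rule ccontr)
    assume "\<not> K < j"
    hence "L j \<le> L K" using strict_mono_less_eq[OF L, of j K] by simp
    thus False using n j by simp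
  qed
  then obtain k where k: "j = Suc k" "K \<le> k" by (cases j) auto
  have "\<not> n < L k" using not_less_Least[of k "\<lambda>j. n < L j"] k by (simp add: j_def)
  thus ?thesis using k j by (intro exI[of _ k]) auto
qed

locale reduction_setting =
  fixes S :: "(nat \<Rightarrow> bool) set" and F :: "nat \<Rightarrow> nat \<Rightarrow> (nat \<Rightarrow> bool) set" and s0 :: "bool list"
  assumes S: "S \<in> sets coin" and compl_pos: "\<And>s. 0 < measure coin (cyl s - S)"
    and start: "ratio (- S) s0 \<le> tol 0" and closed: "\<And>m n. closed (F m n)"
begin

abbreviation "str \<equiv> strings S F s0"
abbreviation "red \<equiv> reduction S F s0"

lemma str_tol: "ratio (- S) (str x k) \<le> tol k"
proof (induction k)
  case (Suc k)
  show ?case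
    using climb_ext_spec[OF S Suc.IH] dip_ext_spec[OF S compl_pos fst_prod_decode_le Suc.IH] by simp
qed (simp add: start)

lemma str_step:
  fixes k :: nat and x :: "nat \<Rightarrow> bool"
  defines "m \<equiv> fst (prod_decode k)" and "t \<equiv> snd (prod_decode k)"
  shows "prefix (str x k) (str x (Suc k))" "length (str x k) < length (str x (Suc k))"
    "low_along (- S) (if jump (F m) x t then (1/2) ^ m else 4 * tol k) (str x k) (str x (Suc k))"
    "jump (F m) x t \<Longrightarrow> \<exists>n. length (str x k) < n \<and> n \<le> length (str x (Suc k)) \<and>
       (1/2) ^ (m + 3) \<le> ratio (- S) (take n (str x (Suc k)))"
  using climb_ext_spec[OF S str_tol[of x k]] dip_ext_spec[OF S compl_pos fst_prod_decode_le str_tol[of x k]]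
  by (simp_all add: m_def t_def split: if_splits)

lemma strict_mono_length_str: "strict_mono (\<lambda>k. length (str x k))"
  by (rule strict_monoI_Suc) (rule str_step(2))

lemma length_str_ge: "k \<le> length (str x k)"
  using seq_suble[OF strict_mono_length_str] .

lemma str_prefix: "j \<le> k \<Longrightarrow> prefix (str x j) (str x k)"
proof (induction k)
  case (Suc k)
  thus ?case using str_step(1)[of x k] prefix_order.trans by (cases "j = Suc k") auto
qed simp

lemma restr_red: "n \<le> length (str x k) \<Longrightarrow> restr (red x) n = take n (str x k)"
proof -
  have "restr (red x) (length (str x k)) = str x k"
  proof (rule nth_equalityI)
    fix i assume "i < length (restr (red x) (length (str x k)))"
    hence i: "i < length (str x k)" by simp
    have li: "i < length (str x (Suc i))" using length_str_ge[of "Suc i" x] by simp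
    have "str x (Suc i) ! i = str x k ! i"
      using str_prefix[of "Suc i" k x] str_prefix[of k "Suc i" x] li i
      by (cases "Suc i \<le> k") (auto simp: prefix_def nth_append)
    thus "restr (red x) (length (str x k)) ! i = str x k ! i" using i by (simp add: reduction_def)
  qed simp
  thus "n \<le> length (str x k) \<Longrightarrow> restr (red x) n = take n (str x k)" by (metis take_restr)
qed

text \<open>Each coordinate of the image depends on finitely many coordinates of \<open>x\<close>.\<close>
lemma continuous_red: "continuous_on UNIV red"
proof (rule continuous_on_coordinatewise_then_product)
  fix i
  define ext :: "bool list \<Rightarrow> nat \<Rightarrow> bool" where "ext u j = (j < length u \<and> u ! j)" for u j
  define h where "h u = str (ext u) (Suc i) ! i" for u
  have "restr (ext (restr x n)) n = restr x n" for x n by (simp add: ext_def restr_def)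
  hence eq: "red x i = h (restr x (Suc i))" for x
    unfolding h_def reduction_def by (metis strings_restr)
  show "continuous_on UNIV (\<lambda>x. red x i)"
    unfolding continuous_on_open_vimage[OF open_UNIV]
  proof (intro allI impI)
    fix B :: "bool set"
    have "(\<lambda>x. red x i) -` B \<inter> UNIV = {x. restr x (Suc i) \<in> {u. h u \<in> B}}"
      by (simp add: eq vimage_def)
    thus "open ((\<lambda>x. red x i) -` B \<inter> UNIV)" by (simp only: open_restr_preimage)
  qed
qed

lemma ratio_red_stage:
  assumes "length (str x k) \<le> n" "n \<le> length (str x (Suc k))"
  shows "ratio (- S) (restr (red x) n) \<le>
    (if jump (F (fst (prod_decode k))) x (snd (prod_decode k)) then (1/2) ^ fst (prod_decode k)
     else 4 * tol k)"
  using str_step(3)[of k x] assms restr_red[OF assms(2)] by (simp add: low_along_def)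

lemma red_in_dens:
  assumes "x \<in> (\<Inter>m. \<Union>n. F m n)"
  shows "red x \<in> dens S"
proof -
  have fin: "finite {t. jump (F m) x t}" for m
  proof -
    have "\<exists>j. x \<in> F m j" using assms by blast
    thus ?thesis using mem_UN_iff_finite_jumps[of "F m" x, OF closed] by simp
  qed
  have small: "\<forall>\<^sub>F n in sequentially. ratio (- S) (restr (red x) n) \<le> (1/2) ^ M" for M
  proof -
    define D where "D = {k. fst (prod_decode k) < M \<and>
      jump (F (fst (prod_decode k))) x (snd (prod_decode k))}"
    have "D \<subseteq> prod_encode ` (SIGMA m:{..<M}. {t. jump (F m) x t})"
    proof
      fix k assume "k \<in> D"
      hence "prod_decode k \<in> (SIGMA m:{..<M}. {t. jump (F m) x t})"
        by (cases "prod_decode k") (auto simp: D_def)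
      thus "k \<in> prod_encode ` (SIGMA m:{..<M}. {t. jump (F m) x t})"
        by (metis image_eqI prod_decode_inverse)
    qed
    moreover have "finite (prod_encode ` (SIGMA m:{..<M}. {t. jump (F m) x t}))"
      using fin by auto
    ultimately have "finite D" by (rule finite_subset)
    then obtain K where "\<forall>k\<in>D. k < K" unfolding finite_nat_set_iff_bounded by blast
    hence K: "\<And>k. k \<in> D \<Longrightarrow> k < K" by blast
    have "ratio (- S) (restr (red x) n) \<le> (1/2) ^ M" if n: "length (str x (max K M)) \<le> n" for n
    proof -
      obtain k where k: "max K M \<le> k" "length (str x k) \<le> n" "n < length (str x (Suc k))"
        using strict_mono_locate[OF strict_mono_length_str n] by blast
      have "(if jump (F (fst (prod_decode k))) x (snd (prod_decode k)) then (1/2) ^ fst (prod_decode k)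
            else 4 * tol k) \<le> (1/2::real) ^ M"
      proof (cases "jump (F (fst (prod_decode k))) x (snd (prod_decode k))")
        case True
        moreover have "k \<notin> D" using K[of k] k(1) by auto
        ultimately have "M \<le> fst (prod_decode k)" by (simp add: D_def)
        hence "(1/2::real) ^ fst (prod_decode k) \<le> (1/2) ^ M" by (intro power_decreasing) auto
        thus ?thesis using True by simp
      next
        case False
        have "4 * tol k = (1/2::real) ^ (k + 2)" by (simp add: tol_def power_add eval_nat_numeral)
        also have "\<dots> \<le> (1/2) ^ M" using k(1) by (intro power_decreasing) auto
        finally show ?thesis using False by simp
      qed
      with ratio_red_stage[OF k(2) less_imp_le[OF k(3)]] show ?thesis by (rule order.trans)
    qed
    thus ?thesis by (rule eventually_sequentiallyI)
  qed
  have "(\<lambda>n. ratio (- S) (restr (red x) n)) \<longlonglongrightarrow> 0"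
  proof (rule order_tendstoI)
    fix r :: real assume "0 < r"
    then obtain M where M: "(1/2::real) ^ M < r" using real_arch_pow_inv[of r "1/2"] by auto
    show "\<forall>\<^sub>F n in sequentially. ratio (- S) (restr (red x) n) < r"
      using small[of M] by eventually_elim (use M in linarith)
  next
    fix r :: real assume "r < 0"
    hence "r < ratio (- S) (restr (red x) n)" for n using ratio_nonneg by (rule order.strict_trans2)
    thus "\<forall>\<^sub>F n in sequentially. r < ratio (- S) (restr (red x) n)" by simp
  qed
  thus ?thesis using dens_iff_compl_tendsto_0[OF S] by simp
qed

lemma red_in_dens_imp:
  assumes "red x \<in> dens S"
  shows "x \<in> (\<Inter>m. \<Union>n. F m n)"
proof (rule ccontr)
  assume "x \<notin> (\<Inter>m. \<Union>n. F m n)"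
  then obtain m where "\<nexists>j. x \<in> F m j" by blast
  hence inf: "infinite {t. jump (F m) x t}" using mem_UN_iff_finite_jumps[of "F m" x, OF closed] by simp
  have "(\<lambda>n. ratio (- S) (restr (red x) n)) \<longlonglongrightarrow> 0"
    using assms dens_iff_compl_tendsto_0[OF S] by simp
  hence "\<forall>\<^sub>F n in sequentially. ratio (- S) (restr (red x) n) < (1/2) ^ (m + 3)"
    by (rule order_tendstoD(2)) simp
  then obtain N where N: "\<And>n. N \<le> n \<Longrightarrow> ratio (- S) (restr (red x) n) < (1/2) ^ (m + 3)"
    by (auto simp: eventually_sequentially)
  obtain t where t: "N \<le> t" "jump (F m) x t"
    using inf[unfolded infinite_nat_iff_unbounded_le] by blast
  define k where "k = prod_encode (m, t)"
  have dk: "fst (prod_decode k) = m" "snd (prod_decode k) = t" by (simp_all add: k_def)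
  obtain n where n: "length (str x k) < n" "n \<le> length (str x (Suc k))"
      "(1/2) ^ (m + 3) \<le> ratio (- S) (take n (str x (Suc k)))"
    using str_step(4)[of k x] t(2) unfolding dk by blast
  have "t \<le> k" unfolding k_def by (rule le_prod_encode_2)
  hence "N \<le> n" using n(1) length_str_ge[of k x] t(1) by linarith
  hence "ratio (- S) (take n (str x (Suc k))) < (1/2) ^ (m + 3)"
    using N[of n] restr_red[OF n(2)] by simp
  thus False using n(3) by linarith
qed

end

text \<open>The density points of a \<open>\<mu>\<close>-measurable set are those of a measurable kernel of it,
  as the two differ by a null set.\<close>
lemma density_points_eq_dens:
  assumes "mu_measurable A"
  obtains S where "S \<in> sets coin" "density_points A = dens S"
proof -
  obtain S N N' where dec: "A = S \<union> N" "N \<subseteq> N'" "N' \<in> null_sets coin" "S \<in> sets coin"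
    using assms unfolding mu_measurable_def by (rule sets_completionE)
  have "measure (completion coin) (A \<inter> cyl s) = measure coin (S \<inter> cyl s)" for s
  proof -
    have "N \<inter> cyl s \<in> null_sets (completion coin)"
      using dec(2) by (intro null_sets_completion_subset[OF _ null_sets_completionI[OF dec(3)]]) auto
    moreover have "A \<inter> cyl s = (S \<inter> cyl s) \<union> (N \<inter> cyl s)" using dec(1) by auto
    ultimately have "measure (completion coin) (A \<inter> cyl s) = measure (completion coin) (S \<inter> cyl s)"
      using dec(4) by (simp add: measure_Un_null_set)
    thus ?thesis using dec(4) by simp
  qed
  hence "density_points A = dens S"
    unfolding density_points_def dens_def ratio_def by simp
  with dec(4) show thesis by (rule that)
qed

text \<open>If \<open>dens S\<close> has empty interior, the complement of \<open>S\<close> is non-null in every cylinder: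
  otherwise the whole cylinder would consist of density points.\<close>
lemma compl_pos_if_interior_empty:
  assumes S: "S \<in> sets coin" and int: "interior (dens S) = {}"
  shows "0 < measure coin (cyl s - S)"
proof (rule ccontr)
  assume "\<not> 0 < measure coin (cyl s - S)"
  hence null: "measure coin (cyl s - S) \<le> 0" by simp
  have "cyl s \<subseteq> dens S"
  proof
    fix y assume y: "y \<in> cyl s"
    have "ratio (- S) (restr y n) = 0" if n: "length s \<le> n" for n
    proof -
      have "cyl (restr y n) \<subseteq> cyl s"
        using cyl_restr_mono[OF n, of y] y by (simp add: mem_cyl_iff)
      hence "measure coin (- S \<inter> cyl (restr y n)) \<le> measure coin (cyl s - S)"
        using S by (intro coin.finite_measure_mono) auto
      hence "measure coin (- S \<inter> cyl (restr y n)) = 0"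
        using null measure_nonneg[of coin "- S \<inter> cyl (restr y n)"] by linarith
      thus ?thesis by (simp add: ratio_def)
    qed
    hence "(\<lambda>n. ratio (- S) (restr y n)) \<longlonglongrightarrow> 0"
      by (intro tendsto_eventually) (auto simp: eventually_sequentially)
    thus "y \<in> dens S" using dens_iff_compl_tendsto_0[OF S] by simp
  qed
  hence "cyl s \<subseteq> interior (dens S)" using open_cyl by (rule interior_maximal)
  thus False using int cyl_nonempty[of s] by auto
qed

lemma start_string_exists:
  assumes S: "S \<in> sets coin" and "y \<in> dens S"
  shows "\<exists>s. ratio (- S) s \<le> tol 0"
proof -
  have "(\<lambda>n. ratio (- S) (restr y n)) \<longlonglongrightarrow> 0" using assms dens_iff_compl_tendsto_0 by blast
  hence "\<forall>\<^sub>F n in sequentially. ratio (- S) (restr y n) < tol 0"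
    by (rule order_tendstoD(2)) (simp add: tol_def)
  then obtain N where "\<forall>n\<ge>N. ratio (- S) (restr y n) < tol 0"
    by (auto simp: eventually_sequentially)
  hence "ratio (- S) (restr y N) \<le> tol 0" using less_imp_le by blast
  thus ?thesis by blast
qed

lemma Pi03_reduces_to_dens:
  assumes S: "S \<in> sets coin" and ne: "dens S \<noteq> {}" and int: "interior (dens S) = {}"
    and Y: "Pi03 Y"
  shows "\<exists>f. continuous_on UNIV f \<and> Y = f -` dens S"
proof -
  from Y obtain F :: "nat \<Rightarrow> nat \<Rightarrow> (nat \<Rightarrow> bool) set"
    where F: "\<forall>m n. closed (F m n)" "Y = (\<Inter>m. \<Union>n. F m n)"
    unfolding Pi03_def by (elim exE conjE)
  obtain s0 where s0: "ratio (- S) s0 \<le> tol 0"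
    using ne start_string_exists[OF S] by blast
  interpret reduction_setting S F s0
    using S compl_pos_if_interior_empty[OF S int] s0 F(1) by unfold_locales simp_all
  have "Y = red -` dens S"
    unfolding F(2) using red_in_dens red_in_dens_imp by (intro equalityI subsetI) auto
  with continuous_red show ?thesis by blast
qed

theorem theorem1p3:
  fixes A :: "(nat \<Rightarrow> bool) set"
  assumes "mu_measurable A"
    and "density_points A \<noteq> {}"
    and "interior (density_points A) = {}"
  shows "complete_Pi03 (density_points A)"
proof -
  obtain S where S: "S \<in> sets coin" and eq: "density_points A = dens S"
    using density_points_eq_dens[OF assms(1)] .
  have "\<exists>f. continuous_on UNIV f \<and> Y = f -` dens S" if "Pi03 Y" for Y
    using Pi03_reduces_to_dens[OF S _ _ that] assms(2,3) unfolding eq by blast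
  with Pi03_dens[OF S] show ?thesis
    unfolding complete_Pi03_def eq by blast
qed
end
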